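(* Let $\mathcal{P}=\{(P_1,\Gamma_1),\ldots,(P_m,\Gamma_m)\}$ be a set of $m$ uncertain points in $\mathbb{R}^2$ under the multipoint model with $P=\bigcup_{i=1}^m P_i$ and $|P|=n$. For any $\beta\in[0,1]$, the $\beta$-hull of $\mathcal{P}$ has $O(n)$ vertices.
   Context: Multipoint model: $P_i=\{p_i^1,\ldots,p_i^{n_i}\}\subset\mathbb{R}^2$ are the possible sites of the $i$-th uncertain point and $\Gamma_i=\{\gamma_i^1,\ldots,\gamma_i^{n_i}\}\subset(0,1]$ the associated probabilities, with $\sum_j\gamma_i^j\le1$. A convex set $C\subseteq\mathbb{R}^2$ is $\beta$-dense with respect to $\mathcal{P}$ if $\sum_{j:\,p_i^j\in C}\gamma_i^j\ge\beta$ for every $i\le m$. The $\beta$-hull of $\mathcal{P}$ is the intersection of all convex $\beta$-dense sets with respect to $\mathcal{P}$. *)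

theory Defs
  imports "HOL-Analysis.Analysis"
begin

text \<open>Multipoint model: uncertain point i (for i < m) has ns i sites
  p i j (j < ns i) in the plane with probabilities \<gamma> i j.\<close>

definition beta_dense ::
  "nat \<Rightarrow> (nat \<Rightarrow> nat) \<Rightarrow> (nat \<Rightarrow> nat \<Rightarrow> real^2) \<Rightarrow> (nat \<Rightarrow> nat \<Rightarrow> real)
   \<Rightarrow> real \<Rightarrow> (real^2) set \<Rightarrow> bool" where
  "beta_dense m ns p \<gamma> \<beta> C \<longleftrightarrow>
     (\<forall>i<m. (\<Sum>j\<in>{j. j < ns i \<and> p i j \<in> C}. \<gamma> i j) \<ge> \<beta>)"

definition beta_hull ::
  "nat \<Rightarrow> (nat \<Rightarrow> nat) \<Rightarrow> (nat \<Rightarrow> nat \<Rightarrow> real^2) \<Rightarrow> (nat \<Rightarrow> nat \<Rightarrow> real)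
   \<Rightarrow> real \<Rightarrow> (real^2) set" where
  "beta_hull m ns p \<gamma> \<beta> = \<Inter>{C. convex C \<and> beta_dense m ns p \<gamma> \<beta> C}"

definition sites :: "nat \<Rightarrow> (nat \<Rightarrow> nat) \<Rightarrow> (nat \<Rightarrow> nat \<Rightarrow> real^2) \<Rightarrow> (real^2) set" where
  "sites m ns p = (\<Union>i<m. p i ` {..<ns i})"

end

theory Submission
  imports Defs
begin

text \<open>The \<beta>-density of a convex set C only depends on C \<inter> P, so C may be replaced by
  conv (C \<inter> P): the \<beta>-hull is an intersection of convex hulls of subsets of the finite
  set P. Let K be such an intersection and v an extreme point of K outside P. Then v is a
  boundary point of some conv T with T \<subseteq> P, and a supporting line of conv T at v passes
  through a point a \<in> T; thus K lies on one side of the line through a and v. For a fixed a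
  and a fixed side, all such v lie on one line through a, and a line contains at most two
  extreme points of K. Hence K has at most |P| + 4|P| extreme points.\<close>

definition rot90 :: "real^2 \<Rightarrow> real^2" where
  "rot90 d = vector [- d$2, d$1]"

lemma inner_real2: "(x::real^2) \<bullet> y = x$1 * y$1 + x$2 * y$2"
  by (simp add: inner_vec_def sum_2)

lemma vec2_eq_iff: "(x::real^2) = y \<longleftrightarrow> x$1 = y$1 \<and> x$2 = y$2"
  by (simp add: vec_eq_iff forall_2)

lemma rot90_inner_commute: "rot90 d \<bullet> e = - (rot90 e \<bullet> d)"
  by (simp add: rot90_def inner_real2)

lemma rot90_eq_0_iff [simp]: "rot90 d = 0 \<longleftrightarrow> d = 0"
  by (auto simp: rot90_def vec2_eq_iff)

lemma rot90_rot90 [simp]: "rot90 (rot90 d) = - d"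
  by (simp add: rot90_def vec2_eq_iff)

lemma orthogonal_imp_rot90_multiple:
  assumes "d \<noteq> 0" "u \<bullet> d = 0"
  shows "\<exists>k. u = k *\<^sub>R rot90 d"
proof -
  have nz: "d$1 * d$1 + d$2 * d$2 \<noteq> 0"
    using assms(1) by (auto simp: vec2_eq_iff add_nonneg_eq_0_iff)
  have "u = ((u$2 * d$1 - u$1 * d$2) / (d$1 * d$1 + d$2 * d$2)) *\<^sub>R rot90 d"
    using assms(2) nz unfolding vec2_eq_iff inner_real2
    by (simp add: rot90_def field_simps) algebra
  then show ?thesis ..
qed

lemma collinear_extreme_points_card_le_2:
  fixes A K :: "'a::euclidean_space set"
  assumes "collinear A" and "\<And>x. x \<in> A \<Longrightarrow> x extreme_point_of K"
  shows "finite A \<and> card A \<le> 2"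
proof (rule ccontr)
  assume "\<not> (finite A \<and> card A \<le> 2)"
  then obtain B where "B \<subseteq> A" "card B = 3"
    by (metis infinite_arbitrarily_large not_less_eq_eq numeral_3_eq_3 numeral_2_eq_2
        obtain_subset_with_card_n)
  then obtain x y z where B: "B = {x, y, z}" "x \<noteq> y" "y \<noteq> z" "x \<noteq> z"
    by (auto simp: card_3_iff)
  have not_between: False if "between (b, c) a" "{a, b, c} \<subseteq> A" "a \<noteq> b" "a \<noteq> c" for a b c
  proof -
    have "a \<in> open_segment b c"
      using that by (auto simp: between_mem_segment open_segment_def)
    moreover have "a extreme_point_of K" "b \<in> K" "c \<in> K"
      using that(2) assms(2) by (auto simp: extreme_point_of_def)
    ultimately show False by (auto simp: extreme_point_of_def)
  qed
  have "collinear {x, y, z}" using assms(1) \<open>B \<subseteq> A\<close> B(1) collinear_subset by blast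
  then show False
    unfolding collinear_between_cases
    using not_between \<open>B \<subseteq> A\<close> B by (metis insert_commute)
qed

text \<open>rot90 (v - a) \<bullet> (x - a) is the cross product of v - a and x - a, so v is a tangent
  point when K lies in the closed half-plane bounded by the line through a and v on the side
  selected by the sign of \<sigma>.\<close>

definition tangent_points :: "(real^2) set \<Rightarrow> real^2 \<Rightarrow> real \<Rightarrow> (real^2) set" where
  "tangent_points K a \<sigma> =
     {v. v extreme_point_of K \<and> v \<noteq> a \<and> (\<forall>x\<in>K. \<sigma> * (rot90 (v - a) \<bullet> (x - a)) \<le> 0)}"

lemma collinear_tangent_points:
  assumes "\<sigma> \<noteq> 0"
  shows "collinear (tangent_points K a \<sigma>)"
proof (cases "tangent_points K a \<sigma> = {}")
  case False
  then obtain v where v: "v \<in> tangent_points K a \<sigma>" by blast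
  have "\<exists>\<mu>. w = a + \<mu> *\<^sub>R (v - a)" if w: "w \<in> tangent_points K a \<sigma>" for w
  proof -
    have "v \<in> K" "w \<in> K" using v w by (auto simp: tangent_points_def extreme_point_of_def)
    then have "\<sigma> * (rot90 (v - a) \<bullet> (w - a)) \<le> 0" "\<sigma> * (rot90 (w - a) \<bullet> (v - a)) \<le> 0"
      using v w by (auto simp: tangent_points_def)
    then have "(w - a) \<bullet> rot90 (v - a) = 0"
      using assms rot90_inner_commute[of "w - a" "v - a"]
      by (simp add: inner_commute)
    moreover have "rot90 (v - a) \<noteq> 0" using v by (simp add: tangent_points_def)
    ultimately obtain k where "w - a = k *\<^sub>R rot90 (rot90 (v - a))"
      using orthogonal_imp_rot90_multiple by blast
    then have "w = a + (- k) *\<^sub>R (v - a)" by (simp add: algebra_simps)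
    then show ?thesis ..
  qed
  then show ?thesis unfolding collinear_alt by blast
qed simp

lemma card_tangent_points_le_2:
  assumes "\<sigma> \<noteq> 0"
  shows "finite (tangent_points K a \<sigma>) \<and> card (tangent_points K a \<sigma>) \<le> 2"
  using collinear_extreme_points_card_le_2[OF collinear_tangent_points[OF assms]]
  by (auto simp: tangent_points_def)

lemma extreme_point_of_Inter_not_in_interior:
  fixes F :: "'a::euclidean_space set set"
  assumes "finite F" and "v extreme_point_of \<Inter>F"
  obtains C where "C \<in> F" and "v \<notin> interior C"
proof -
  have "\<Inter>(interior ` F) \<subseteq> \<Inter>F" using interior_subset by blast
  moreover have "open (\<Inter>(interior ` F))" using assms(1) by blast
  ultimately have "\<Inter>(interior ` F) \<subseteq> interior (\<Inter>F)" by (rule interior_maximal)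
  then show ?thesis
    using extreme_point_not_in_interior[OF assms(2)] that by blast
qed

lemma supporting_hyperplane_not_in_interior:
  fixes C :: "'a::euclidean_space set"
  assumes "convex C" and "v \<in> C" and "v \<notin> interior C"
  obtains u where "u \<noteq> 0" and "\<And>y. y \<in> C \<Longrightarrow> u \<bullet> y \<le> u \<bullet> v"
proof (cases "interior C = {}")
  case True
  obtain u b where "u \<noteq> 0" and "C \<subseteq> {x. u \<bullet> x = b}"
    using empty_interior_subset_hyperplane[OF assms(1) True] by blast
  have le: "u \<bullet> y \<le> u \<bullet> v" if "y \<in> C" for y
  proof -
    have "u \<bullet> y = b" "u \<bullet> v = b" using \<open>C \<subseteq> _\<close> that assms(2) by blast+
    then show ?thesis by simp
  qed
  show ?thesis by (rule that[OF \<open>u \<noteq> 0\<close> le])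
next
  case False
  then have "v \<notin> rel_interior C"
    using assms(3) by (simp add: rel_interior_nonempty_interior)
  moreover have "v \<in> closure C" using assms(2) closure_subset by blast
  ultimately obtain u where "u \<noteq> 0" and u: "\<And>y. y \<in> closure C \<Longrightarrow> u \<bullet> v \<le> u \<bullet> y"
    using supporting_hyperplane_relative_frontier[OF assms(1)] by blast
  have "- u \<bullet> y \<le> - u \<bullet> v" if "y \<in> C" for y
    using u[of y] that closure_subset by auto
  then show ?thesis using that[of "- u"] \<open>u \<noteq> 0\<close> by simp
qed

lemma convex_hull_supporting_hyperplane_meets:
  assumes "v \<in> convex hull T" and "\<And>y. y \<in> convex hull T \<Longrightarrow> u \<bullet> y \<le> u \<bullet> v"
  shows "\<exists>t\<in>T. u \<bullet> t = u \<bullet> v"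
proof (rule ccontr)
  assume "\<not> ?thesis"
  then have "T \<subseteq> {y. u \<bullet> y < u \<bullet> v}"
    using assms(2) hull_inc by fastforce
  then have "convex hull T \<subseteq> {y. u \<bullet> y < u \<bullet> v}"
    by (simp add: convex_halfspace_lt hull_minimal)
  then show False using assms(1) by blast
qed

lemma extreme_point_of_Inter_convex_hulls_tangent:
  assumes "finite S" and "D \<subseteq> Pow S"
    and "v extreme_point_of \<Inter>((\<lambda>T. convex hull T) ` D)" and "v \<notin> S"
  shows "\<exists>a\<in>S. \<exists>\<sigma>\<in>{1, -1}. v \<in> tangent_points (\<Inter>((\<lambda>T. convex hull T) ` D)) a \<sigma>"
proof -
  let ?K = "\<Inter>((\<lambda>T. convex hull T) ` D)"
  have "finite ((\<lambda>T. convex hull T) ` D)"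
    using assms(1,2) by (meson finite_Pow_iff finite_subset finite_imageI)
  then obtain T where T: "T \<in> D" and "v \<notin> interior (convex hull T)"
    using extreme_point_of_Inter_not_in_interior[OF _ assms(3)] by blast
  moreover have "v \<in> convex hull T"
    using assms(3) T by (auto simp: extreme_point_of_def)
  ultimately obtain u where "u \<noteq> 0" and u: "\<And>y. y \<in> convex hull T \<Longrightarrow> u \<bullet> y \<le> u \<bullet> v"
    using supporting_hyperplane_not_in_interior[OF convex_convex_hull] by metis
  obtain a where "a \<in> T" and ua: "u \<bullet> a = u \<bullet> v"
    using convex_hull_supporting_hyperplane_meets[OF \<open>v \<in> convex hull T\<close> u] by blast
  have "a \<in> S" "a \<noteq> v" using \<open>a \<in> T\<close> T assms(2,4) by auto
  moreover have "u \<bullet> (v - a) = 0" using ua by (simp add: inner_diff_right)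
  ultimately obtain k where k: "u = k *\<^sub>R rot90 (v - a)"
    using orthogonal_imp_rot90_multiple by (metis eq_iff_diff_eq_0)
  have "k * (rot90 (v - a) \<bullet> (x - a)) \<le> 0" if "x \<in> ?K" for x
    using u[of x] that T ua k by (auto simp: inner_diff_right right_diff_distrib)
  moreover have "sgn k * y \<le> 0" if "k * y \<le> 0" for y :: real
    using that by (cases k "0::real" rule: linorder_cases) (auto simp: mult_le_0_iff)
  ultimately have "\<forall>x\<in>?K. sgn k * (rot90 (v - a) \<bullet> (x - a)) \<le> 0"
    by blast
  moreover have "sgn k \<in> {1, -1}" using k \<open>u \<noteq> 0\<close> by (auto simp: sgn_if)
  ultimately show ?thesis
    using \<open>a \<in> S\<close> \<open>a \<noteq> v\<close> assms(3) by (auto simp: tangent_points_def)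
qed

lemma card_extreme_points_Inter_convex_hulls:
  fixes S :: "(real^2) set"
  assumes "finite S" and "D \<subseteq> Pow S"
  defines "E \<equiv> {x. x extreme_point_of \<Inter>((\<lambda>T. convex hull T) ` D)}"
  shows "finite E \<and> card E \<le> 5 * card S"
proof -
  define U where "U = (\<Union>(a, \<sigma>)\<in>S \<times> {1, -1}. tangent_points (\<Inter>((\<lambda>T. convex hull T) ` D)) a \<sigma>)"
  have fin_tangent: "finite (tangent_points K a \<sigma>) \<and> card (tangent_points K a \<sigma>) \<le> 2"
    if "\<sigma> \<in> {1, -1}" for K a \<sigma> using that card_tangent_points_le_2 by auto
  have "finite (S \<times> {1, -1 :: real})" using assms(1) by simp
  then have "finite U" "card U \<le> 2 * card (S \<times> {1, -1 :: real})"
    unfolding U_def using fin_tangent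
    by (auto intro!: card_UN_le[THEN order_trans] sum_bounded_above[THEN order_trans])
  then have U: "finite U" "card U \<le> 4 * card S"
    by (simp_all add: card_cartesian_product)
  have "E \<subseteq> S \<union> U"
    unfolding E_def U_def using extreme_point_of_Inter_convex_hulls_tangent[OF assms(1,2)] by blast
  moreover have "card (S \<union> U) \<le> 5 * card S"
    using card_Un_le[of S U] U(2) by linarith
  ultimately show ?thesis
    using assms(1) U(1) by (meson card_mono finite_UnI finite_subset order_trans)
qed

lemma beta_dense_Int_sites:
  "beta_dense m ns p \<gamma> \<beta> C \<longleftrightarrow> beta_dense m ns p \<gamma> \<beta> (C \<inter> sites m ns p)"
proof -
  have "p i j \<in> sites m ns p" if "i < m" "j < ns i" for i j
    using that by (auto simp: sites_def)
  then have "{j. j < ns i \<and> p i j \<in> C} = {j. j < ns i \<and> p i j \<in> C \<inter> sites m ns p}"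
    if "i < m" for i using that by blast
  then show ?thesis by (simp add: beta_dense_def)
qed

lemma beta_hull_eq_Inter_convex_hulls:
  "beta_hull m ns p \<gamma> \<beta> =
     \<Inter>((\<lambda>T. convex hull T) ` (\<lambda>C. C \<inter> sites m ns p) ` {C. convex C \<and> beta_dense m ns p \<gamma> \<beta> C})"
  (is "_ = \<Inter>((\<lambda>T. convex hull T) ` (\<lambda>C. C \<inter> ?S) ` ?F)")
proof -
  have hull_sub: "convex hull (C \<inter> ?S) \<subseteq> C" if "C \<in> ?F" for C
    using that by (simp add: hull_minimal)
  have hull_in: "convex hull (C \<inter> ?S) \<in> ?F" if "C \<in> ?F" for C
  proof -
    have "convex hull (C \<inter> ?S) \<inter> ?S = C \<inter> ?S"
      using hull_sub[OF that] hull_subset[of "C \<inter> ?S" convex] by blast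
    then have "beta_dense m ns p \<gamma> \<beta> (convex hull (C \<inter> ?S))"
      using that beta_dense_Int_sites[of m ns p \<gamma> \<beta> C]
        beta_dense_Int_sites[of m ns p \<gamma> \<beta> "convex hull (C \<inter> ?S)"] by simp
    then show ?thesis by simp
  qed
  show ?thesis
    unfolding beta_hull_def
  proof (rule antisym)
    show "\<Inter>?F \<subseteq> \<Inter>((\<lambda>T. convex hull T) ` (\<lambda>C. C \<inter> ?S) ` ?F)"
    proof (rule Inter_greatest)
      fix X assume "X \<in> (\<lambda>T. convex hull T) ` (\<lambda>C. C \<inter> ?S) ` ?F"
      then obtain C where "C \<in> ?F" and "X = convex hull (C \<inter> ?S)" by blast
      then show "\<Inter>?F \<subseteq> X" using hull_in by (simp add: Inter_lower)
    qed
    show "\<Inter>((\<lambda>T. convex hull T) ` (\<lambda>C. C \<inter> ?S) ` ?F) \<subseteq> \<Inter>?F"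
    proof (rule Inter_greatest)
      fix C assume "C \<in> ?F"
      then have "convex hull (C \<inter> ?S) \<in> (\<lambda>T. convex hull T) ` (\<lambda>C. C \<inter> ?S) ` ?F" by blast
      then show "\<Inter>((\<lambda>T. convex hull T) ` (\<lambda>C. C \<inter> ?S) ` ?F) \<subseteq> C"
        using hull_sub[OF \<open>C \<in> ?F\<close>] by (meson Inter_lower order_trans)
    qed
  qed
qed

theorem mainTheorem9:
  "\<exists>c::real. \<forall>(m::nat) ns p \<gamma> (\<beta>::real).
     (\<forall>i<m. inj_on (p i) {..<ns i}) \<and>
     (\<forall>i<m. \<forall>j<ns i. 0 < \<gamma> i j \<and> \<gamma> i j \<le> 1) \<and>
     (\<forall>i<m. (\<Sum>j<ns i. \<gamma> i j) \<le> 1) \<and>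
     0 \<le> \<beta> \<and> \<beta> \<le> 1
     \<longrightarrow> finite {x. x extreme_point_of beta_hull m ns p \<gamma> \<beta>} \<and>
         real (card {x. x extreme_point_of beta_hull m ns p \<gamma> \<beta>})
           \<le> c * real (card (sites m ns p))"
proof (intro exI[of _ 5] allI impI)
  \<comment> \<open>The bound holds for arbitrary weights and \<beta>.\<close>
  fix m ns p \<gamma> \<beta>
  have "finite (sites m ns p)" by (simp add: sites_def)
  moreover have "(\<lambda>C. C \<inter> sites m ns p) ` {C. convex C \<and> beta_dense m ns p \<gamma> \<beta> C}
      \<subseteq> Pow (sites m ns p)" by blast
  ultimately have "finite {x. x extreme_point_of beta_hull m ns p \<gamma> \<beta>} \<and>
      card {x. x extreme_point_of beta_hull m ns p \<gamma> \<beta>} \<le> 5 * card (sites m ns p)"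
    unfolding beta_hull_eq_Inter_convex_hulls by (rule card_extreme_points_Inter_convex_hulls)
  then show "finite {x. x extreme_point_of beta_hull m ns p \<gamma> \<beta>} \<and>
      real (card {x. x extreme_point_of beta_hull m ns p \<gamma> \<beta>}) \<le> 5 * real (card (sites m ns p))"
    by simp
qed

end
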